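(* Let $v>0$, $d>0$ and $s\ge\frac d2$. Let $M=\lfloor 2s/d\rfloor+1$. For $i\in\{1,\dots,M\}$, lane $i$ is the horizontal line $y=s-(i-1)d$, and the robots of lane $i$ are at time $0$ at the positions $(s+kd,\ s-(i-1)d)$, $k\in\mathbb{Z}_{\ge0}$, all moving with constant velocity $(-v,0)$; a robot reaches the target when its distance to the origin is at most $s$. For $j\in\{1,\dots,M\}$ let $d_j=s-\sqrt{s^2-(s-(j-1)d)^2}$, and let $$J=\begin{cases}\lfloor s/d\rfloor+1,&\text{if } |s-\lfloor s/d\rfloor d|\le|s-\lceil s/d\rceil d|,\\ \lceil s/d\rceil+1,&\text{otherwise.}\end{cases}$$ Then $d_J=\min_{1\le j\le M}d_j$, so the first robot to reach the target is the one starting at $(s,s-(J-1)d)$, and, measuring time from this first arrival, for every $T>0$ the throughput is $$f_p(T)=\frac1T\sum_{i=1}^{M}N_i(T)-\frac1T,\qquad N_i(T)=\begin{cases}\left\lfloor\frac{vT-d_i+d_J}{d}+1\right\rfloor,& T\ge\frac{d_i-d_J}{v},\\ 0,&\text{otherwise,}\end{cases}$$ and $\displaystyle\lim_{T\to\infty}f_p(T)=\left\lfloor\frac{2s}{d}+1\right\rfloor\frac vd$.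
   Context: Throughput at time $T>0$ after the first robot reaches the target: $f(T)=\frac{N(T)-1}{T}$, where $N(T)$ is the number of robots that reached the target (closed disc of radius $s$ centred at the origin) by time $T$, time $0$ being the arrival of the first robot. $N_i(T)$ is the number of robots of lane $i$ that have arrived by time $T$. This is the "parallel lanes" strategy. *)

theory Defs
  imports "HOL-Analysis.Analysis"
begin

text \<open>Absolute time t starts at 0 (initial configuration).\<close>

definition num_lanes :: "real \<Rightarrow> real \<Rightarrow> nat" where
  "num_lanes d s = nat \<lfloor>2 * s / d\<rfloor> + 1"

definition robot_pos :: "real \<Rightarrow> real \<Rightarrow> real \<Rightarrow> nat \<Rightarrow> nat \<Rightarrow> real \<Rightarrow> real \<times> real" where
  "robot_pos v d s i k t = (s + real k * d - v * t, s - (real i - 1) * d)"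

definition arrival :: "real \<Rightarrow> real \<Rightarrow> real \<Rightarrow> nat \<Rightarrow> nat \<Rightarrow> real" where
  "arrival v d s i k = Inf {t. 0 \<le> t \<and> robot_pos v d s i k t \<in> cball 0 s}"

definition first_arrival :: "real \<Rightarrow> real \<Rightarrow> real \<Rightarrow> real" where
  "first_arrival v d s = Inf {arrival v d s i k | i k. i \<in> {1..num_lanes d s}}"

definition lane_count :: "real \<Rightarrow> real \<Rightarrow> real \<Rightarrow> nat \<Rightarrow> real \<Rightarrow> nat" where
  "lane_count v d s i T = card {k. arrival v d s i k \<le> first_arrival v d s + T}"

definition total_count :: "real \<Rightarrow> real \<Rightarrow> real \<Rightarrow> real \<Rightarrow> nat" where
  "total_count v d s T =
     card {(i, k). i \<in> {1..num_lanes d s} \<and> arrival v d s i k \<le> first_arrival v d s + T}"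

definition throughput :: "real \<Rightarrow> real \<Rightarrow> real \<Rightarrow> real \<Rightarrow> real" where
  "throughput v d s T = (real (total_count v d s T) - 1) / T"

definition dlane :: "real \<Rightarrow> real \<Rightarrow> nat \<Rightarrow> real" where
  "dlane d s j = s - sqrt (s\<^sup>2 - (s - (real j - 1) * d)\<^sup>2)"

definition Jlane :: "real \<Rightarrow> real \<Rightarrow> nat" where
  "Jlane d s = (if \<bar>s - real_of_int \<lfloor>s / d\<rfloor> * d\<bar> \<le> \<bar>s - real_of_int \<lceil>s / d\<rceil> * d\<bar>
                then nat \<lfloor>s / d\<rfloor> + 1 else nat \<lceil>s / d\<rceil> + 1)"

end

theory Submission
  imports Defs "HOL-Real_Asymp.Real_Asymp"
begin

text \<open>A robot moving left at height \<open>y\<close> enters the disc when its abscissa reaches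
  \<open>sqrt (s\<^sup>2 - y\<^sup>2)\<close>, so robot \<open>k\<close> of lane \<open>i\<close> arrives at time \<open>(k d + d\<^sub>i) / v\<close>.
  Hence the lane with least \<open>d\<^sub>i\<close> (height closest to \<open>0\<close>) arrives first, each lane
  contributes a floor of an affine function of \<open>T\<close>, and dividing the sum of \<open>M\<close> such floors
  by \<open>T\<close> tends to \<open>M v / d\<close>.\<close>

lemma horizontal_entry_time:
  fixes x y s v :: real
  assumes "v > 0" and "\<bar>y\<bar> \<le> s" and "sqrt (s\<^sup>2 - y\<^sup>2) \<le> x"
  shows "Inf {t. 0 \<le> t \<and> (x - v * t, y) \<in> cball 0 s} = (x - sqrt (s\<^sup>2 - y\<^sup>2)) / v"
proof -
  define w where "w = sqrt (s\<^sup>2 - y\<^sup>2)"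
  have s_nonneg: "0 \<le> s" using assms(2) by linarith
  then have "y\<^sup>2 \<le> s\<^sup>2" using assms(2) by (metis abs_of_nonneg abs_le_square_iff)
  then have w_nonneg: "0 \<le> w" and w_sq: "w\<^sup>2 = s\<^sup>2 - y\<^sup>2" by (simp_all add: w_def)
  have in_disc: "(x - v * t, y) \<in> cball 0 s \<longleftrightarrow> \<bar>x - v * t\<bar> \<le> w" for t
  proof -
    have "(x - v * t, y) \<in> cball 0 s \<longleftrightarrow> (x - v * t)\<^sup>2 + y\<^sup>2 \<le> s\<^sup>2"
      by (simp add: norm_Pair real_sqrt_le_iff' s_nonneg)
    also have "\<dots> \<longleftrightarrow> (x - v * t)\<^sup>2 \<le> w\<^sup>2" using w_sq by linarith
    also have "\<dots> \<longleftrightarrow> \<bar>x - v * t\<bar> \<le> w" by (rule power2_le_iff_abs_le[OF w_nonneg])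
    finally show ?thesis .
  qed
  define a where "a = (x - w) / v"
  have va: "v * a = x - w" using assms(1) by (simp add: a_def)
  have "(x - v * a, y) \<in> cball 0 s" using in_disc[of a] va w_nonneg by simp
  moreover have "0 \<le> a" using assms(1,3) by (simp add: a_def w_def)
  ultimately have "a \<in> {t. 0 \<le> t \<and> (x - v * t, y) \<in> cball 0 s}" by simp
  moreover have "a \<le> t" if "t \<in> {t. 0 \<le> t \<and> (x - v * t, y) \<in> cball 0 s}" for t
  proof -
    have "x - v * t \<le> w" using that in_disc by fastforce
    then have "v * a \<le> v * t" using va by linarith
    then show ?thesis using assms(1) by simp
  qed
  ultimately show ?thesis unfolding a_def w_def[symmetric] by (rule cInf_eq_minimum)
qed

lemma abs_lane_height_le:
  assumes "d > 0" and "s \<ge> d / 2" and "i \<in> {1..num_lanes d s}"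
  shows "\<bar>s - (real i - 1) * d\<bar> \<le> s"
proof -
  have "0 \<le> \<lfloor>2 * s / d\<rfloor>" using assms(1,2) by simp
  moreover have "real i \<le> real (nat \<lfloor>2 * s / d\<rfloor>) + 1"
    using assms(3) by (simp add: num_lanes_def)
  ultimately have "real i - 1 \<le> of_int \<lfloor>2 * s / d\<rfloor>" by simp
  then have "real i - 1 \<le> 2 * s / d" by linarith
  then have "(real i - 1) * d \<le> 2 * s" using assms(1) by (simp add: pos_le_divide_eq)
  moreover have "0 \<le> (real i - 1) * d" using assms(1,3) by simp
  ultimately show ?thesis by (simp add: abs_le_iff)
qed

lemma arrival_eq:
  assumes "v > 0" and "d > 0" and "s \<ge> d / 2" and "i \<in> {1..num_lanes d s}"
  shows "arrival v d s i k = (real k * d + dlane d s i) / v"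
proof -
  define y where "y = s - (real i - 1) * d"
  have y_le: "\<bar>y\<bar> \<le> s" unfolding y_def by (rule abs_lane_height_le[OF assms(2-4)])
  have "sqrt (s\<^sup>2 - y\<^sup>2) \<le> sqrt (s\<^sup>2)" by (rule real_sqrt_le_mono) simp
  also have "\<dots> = s" using y_le by simp
  also have "\<dots> \<le> s + real k * d" using assms(2) by simp
  finally have "arrival v d s i k = (s + real k * d - sqrt (s\<^sup>2 - y\<^sup>2)) / v"
    unfolding arrival_def robot_pos_def y_def[symmetric]
    using horizontal_entry_time[OF assms(1) y_le] by simp
  then show ?thesis by (simp add: dlane_def y_def)
qed

lemma Jlane_in_lanes:
  assumes "d > 0" and "s \<ge> d / 2"
  shows "Jlane d s \<in> {1..num_lanes d s}"
proof -
  define x where "x = s / d"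
  have x: "x \<ge> 1 / 2" using assms by (simp add: x_def field_simps)
  have "\<lfloor>x\<rfloor> \<le> \<lfloor>2 * x\<rfloor>" using x by (intro floor_mono) linarith
  then have "nat \<lfloor>x\<rfloor> \<le> nat \<lfloor>2 * x\<rfloor>" by (rule nat_mono)
  moreover have "nat \<lceil>x\<rceil> \<le> nat \<lfloor>2 * x\<rfloor>"
  proof -
    have "real_of_int \<lceil>x\<rceil> \<le> 2 * x"
    proof (cases "\<lceil>x\<rceil> \<ge> 2")
      case True
      then show ?thesis by linarith
    next
      case False
      then have "\<lceil>x\<rceil> = 1" using x by linarith
      then show ?thesis using x by simp
    qed
    then have "\<lceil>x\<rceil> \<le> \<lfloor>2 * x\<rfloor>" by (simp add: le_floor_iff)
    then show ?thesis by (rule nat_mono)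
  qed
  moreover have "num_lanes d s = nat \<lfloor>2 * x\<rfloor> + 1" by (simp add: num_lanes_def x_def)
  ultimately show ?thesis unfolding Jlane_def x_def[symmetric] by auto
qed

text \<open>Lane \<open>i\<close> has height \<open>s - (i - 1) d\<close>; the heights nearest to \<open>0\<close> are those with
  \<open>i - 1 = \<lfloor>s/d\<rfloor>\<close> and \<open>i - 1 = \<lceil>s/d\<rceil>\<close>, and \<open>dlane\<close> is increasing in the absolute height.\<close>
lemma dlane_Jlane_le:
  assumes "d > 0" and "s \<ge> d / 2" and "i \<in> {1..num_lanes d s}"
  shows "dlane d s (Jlane d s) \<le> dlane d s i"
proof -
  define fl where "fl = \<lfloor>s / d\<rfloor>"
  define ce where "ce = \<lceil>s / d\<rceil>"
  have "s / d \<ge> 0" using assms(1,2) by simp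
  then have fl_nonneg: "fl \<ge> 0" and ce_nonneg: "ce \<ge> 0"
    by (simp_all add: fl_def ce_def)
  have fl_le: "of_int fl * d \<le> s" using assms(1) by (simp add: fl_def pos_le_divide_eq[symmetric])
  have ce_ge: "s \<le> of_int ce * d" using assms(1) by (simp add: ce_def pos_divide_le_eq[symmetric])
  have ce_le: "ce \<le> fl + 1" unfolding ce_def fl_def by linarith
  have height_J: "\<bar>s - (real (Jlane d s) - 1) * d\<bar> = min \<bar>s - of_int fl * d\<bar> \<bar>s - of_int ce * d\<bar>"
    using fl_nonneg ce_nonneg unfolding Jlane_def fl_def[symmetric] ce_def[symmetric] by auto
  define m where "m = int i - 1"
  have m: "real i - 1 = of_int m" by (simp add: m_def)
  have "\<bar>s - (real (Jlane d s) - 1) * d\<bar> \<le> \<bar>s - (real i - 1) * d\<bar>"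
  proof (cases "m \<le> fl")
    case True
    then have "of_int m * d \<le> of_int fl * d" using assms(1) by simp
    then show ?thesis unfolding height_J m using fl_le by linarith
  next
    case False
    then have "of_int ce * d \<le> of_int m * d" using ce_le assms(1) by simp
    then show ?thesis unfolding height_J m using ce_ge by linarith
  qed
  then show ?thesis by (simp add: dlane_def abs_le_square_iff)
qed

lemma first_arrival_eq:
  assumes "v > 0" and "d > 0" and "s \<ge> d / 2"
  shows "first_arrival v d s = arrival v d s (Jlane d s) 0"
  unfolding first_arrival_def
proof (rule cInf_eq_minimum)
  show "arrival v d s (Jlane d s) 0 \<in> {arrival v d s i k | i k. i \<in> {1..num_lanes d s}}"
    using Jlane_in_lanes[OF assms(2,3)] by blast
next
  fix x assume "x \<in> {arrival v d s i k | i k. i \<in> {1..num_lanes d s}}"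
  then obtain i k where x: "x = arrival v d s i k" and i: "i \<in> {1..num_lanes d s}" by blast
  have "dlane d s (Jlane d s) \<le> real k * d + dlane d s i"
    using dlane_Jlane_le[OF assms(2,3) i] assms(2) by (simp add: add_increasing)
  then show "arrival v d s (Jlane d s) 0 \<le> x"
    using assms(1) unfolding x arrival_eq[OF assms i] arrival_eq[OF assms Jlane_in_lanes[OF assms(2,3)]]
    by (simp add: divide_right_mono)
qed

lemma nat_le_real_eq_lessThan: "{k::nat. real k \<le> q} = {..<nat (\<lfloor>q\<rfloor> + 1)}"
proof -
  have "real k \<le> q \<longleftrightarrow> int k \<le> \<lfloor>q\<rfloor>" for k by (metis le_floor_iff of_int_of_nat_eq)
  then have "real k \<le> q \<longleftrightarrow> k < nat (\<lfloor>q\<rfloor> + 1)" for k by linarith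
  then show ?thesis by blast
qed

lemma tendsto_sum_floor_affine_div:
  fixes a b :: real and c :: "'i \<Rightarrow> real"
  assumes "finite A"
  shows "((\<lambda>T. ((\<Sum>i\<in>A. real_of_int \<lfloor>a * T + c i\<rfloor>) - b) / T) \<longlongrightarrow> real (card A) * a) at_top"
proof -
  define n where "n = real (card A)"
  define C where "C = (\<Sum>i\<in>A. c i)"
  define S where "S T = (\<Sum>i\<in>A. real_of_int \<lfloor>a * T + c i\<rfloor>)" for T
  have affine: "(\<Sum>i\<in>A. a * T + c i) = n * a * T + C" for T
    by (simp add: sum.distrib n_def C_def)
  have S_ge: "n * a * T + C - n \<le> S T" for T
  proof -
    have "(\<Sum>i\<in>A. a * T + c i - 1) \<le> S T"
      unfolding S_def by (rule sum_mono) linarith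
    then show ?thesis using affine[of T] by (simp add: sum_subtractf n_def)
  qed
  have S_le: "S T \<le> n * a * T + C" for T
  proof -
    have "S T \<le> (\<Sum>i\<in>A. a * T + c i)"
      unfolding S_def by (rule sum_mono) simp
    then show ?thesis using affine[of T] by simp
  qed
  have bounds: "n * a + (C - n - b) / T \<le> (S T - b) / T \<and> (S T - b) / T \<le> n * a + (C - b) / T"
    if "T > 0" for T
  proof -
    have "n * a + (C - n - b) / T = (n * a * T + C - n - b) / T"
      and "n * a + (C - b) / T = (n * a * T + C - b) / T"
      using that by (simp_all add: field_simps)
    moreover have "(n * a * T + C - n - b) / T \<le> (S T - b) / T"
      using S_ge[of T] that by (intro divide_right_mono) auto
    moreover have "(S T - b) / T \<le> (n * a * T + C - b) / T"
      using S_le[of T] that by (intro divide_right_mono) auto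
    ultimately show ?thesis by simp
  qed
  have eventually_bounds: "eventually (\<lambda>T. n * a + (C - n - b) / T \<le> (S T - b) / T
      \<and> (S T - b) / T \<le> n * a + (C - b) / T) at_top"
    using eventually_gt_at_top[of 0] by (rule eventually_mono) (rule bounds)
  have "((\<lambda>T. n * a + (C - n - b) / T) \<longlongrightarrow> n * a) at_top" by real_asymp
  moreover have "((\<lambda>T. n * a + (C - b) / T) \<longlongrightarrow> n * a) at_top" by real_asymp
  moreover have "eventually (\<lambda>T. n * a + (C - n - b) / T \<le> (S T - b) / T) at_top"
    using eventually_bounds by (rule eventually_mono) blast
  moreover have "eventually (\<lambda>T. (S T - b) / T \<le> n * a + (C - b) / T) at_top"
    using eventually_bounds by (rule eventually_mono) blast
  ultimately have "((\<lambda>T. (S T - b) / T) \<longlongrightarrow> n * a) at_top"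
    by (rule tendsto_sandwich[rotated 2])
  then show ?thesis by (simp add: S_def n_def)
qed

lemma arrived_by_iff:
  assumes "v > 0" and "d > 0" and "s \<ge> d / 2" and "i \<in> {1..num_lanes d s}"
  shows "arrival v d s i k \<le> first_arrival v d s + T \<longleftrightarrow>
    real k \<le> (v * T - dlane d s i + dlane d s (Jlane d s)) / d"
proof -
  have "arrival v d s i k \<le> first_arrival v d s + T \<longleftrightarrow>
      (real k * d + dlane d s i) / v \<le> dlane d s (Jlane d s) / v + T"
    using arrival_eq[OF assms] arrival_eq[OF assms(1-3) Jlane_in_lanes[OF assms(2,3)]]
    by (simp add: first_arrival_eq[OF assms(1-3)])
  also have "\<dots> \<longleftrightarrow> (real k * d + dlane d s i) / v \<le> (dlane d s (Jlane d s) + v * T) / v"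
    using assms(1) by (simp add: add_divide_distrib)
  also have "\<dots> \<longleftrightarrow> real k * d + dlane d s i \<le> dlane d s (Jlane d s) + v * T"
    using assms(1) by (simp add: divide_le_cancel)
  also have "\<dots> \<longleftrightarrow> real k * d \<le> v * T - dlane d s i + dlane d s (Jlane d s)"
    by linarith
  also have "\<dots> \<longleftrightarrow> real k \<le> (v * T - dlane d s i + dlane d s (Jlane d s)) / d"
    using assms(2) by (simp add: pos_le_divide_eq)
  finally show ?thesis .
qed

lemma lane_count_eq:
  assumes "v > 0" and "d > 0" and "s \<ge> d / 2" and "i \<in> {1..num_lanes d s}"
  shows "real (lane_count v d s i T) =
    (if T \<ge> (dlane d s i - dlane d s (Jlane d s)) / v
     then real_of_int \<lfloor>(v * T - dlane d s i + dlane d s (Jlane d s)) / d + 1\<rfloor> else 0)"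
proof -
  define q where "q = (v * T - dlane d s i + dlane d s (Jlane d s)) / d"
  have "T \<ge> (dlane d s i - dlane d s (Jlane d s)) / v \<longleftrightarrow> q \<ge> 0"
    using assms(1,2) by (simp add: q_def pos_divide_le_eq zero_le_divide_iff algebra_simps)
  moreover have "lane_count v d s i T = nat (\<lfloor>q\<rfloor> + 1)"
    unfolding lane_count_def arrived_by_iff[OF assms] q_def[symmetric] nat_le_real_eq_lessThan
    by simp
  moreover have "\<lfloor>q\<rfloor> + 1 \<le> 0" if "q < 0" using that by linarith
  ultimately show ?thesis by (auto simp: q_def[symmetric])
qed

lemma total_count_eq_sum:
  assumes "v > 0" and "d > 0" and "s \<ge> d / 2"
  shows "total_count v d s T = (\<Sum>i=1..num_lanes d s. lane_count v d s i T)"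
proof -
  have "{(i, k). i \<in> {1..num_lanes d s} \<and> arrival v d s i k \<le> first_arrival v d s + T}
      = Sigma {1..num_lanes d s} (\<lambda>i. {k. arrival v d s i k \<le> first_arrival v d s + T})"
    by auto
  moreover have "finite {k. arrival v d s i k \<le> first_arrival v d s + T}"
    if "i \<in> {1..num_lanes d s}" for i
    unfolding arrived_by_iff[OF assms that] nat_le_real_eq_lessThan by simp
  ultimately show ?thesis unfolding total_count_def lane_count_def by (simp add: card_SigmaI)
qed

lemma throughput_tendsto:
  assumes "v > 0" and "d > 0" and "s \<ge> d / 2"
  shows "(throughput v d s \<longlongrightarrow> real (num_lanes d s) * v / d) at_top"
proof -
  define M where "M = num_lanes d s"
  define dJ where "dJ = dlane d s (Jlane d s)"
  define c where "c i = (dJ - dlane d s i) / d + 1" for i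
  have affine: "(v * T - dlane d s i + dJ) / d + 1 = v / d * T + c i" for T i
    using assms(2) by (simp add: c_def field_simps)
  have "eventually (\<lambda>T. \<forall>i\<in>{1..M}. (dlane d s i - dJ) / v \<le> T) at_top"
    by (intro eventually_ball_finite ballI eventually_ge_at_top) simp
  then have "eventually (\<lambda>T. ((\<Sum>i=1..M. real_of_int \<lfloor>v / d * T + c i\<rfloor>) - 1) / T
      = throughput v d s T) at_top"
  proof (rule eventually_mono)
    fix T assume late: "\<forall>i\<in>{1..M}. (dlane d s i - dJ) / v \<le> T"
    have "real (lane_count v d s i T) = real_of_int \<lfloor>v / d * T + c i\<rfloor>" if "i \<in> {1..M}" for i
      using lane_count_eq[OF assms, of i T] late that
      unfolding M_def dJ_def[symmetric] affine by simp
    then show "((\<Sum>i=1..M. real_of_int \<lfloor>v / d * T + c i\<rfloor>) - 1) / T = throughput v d s T"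
      by (simp add: throughput_def total_count_eq_sum[OF assms] M_def)
  qed
  moreover have "((\<lambda>T. ((\<Sum>i=1..M. real_of_int \<lfloor>v / d * T + c i\<rfloor>) - 1) / T)
      \<longlongrightarrow> real M * v / d) at_top"
    using tendsto_sum_floor_affine_div[of "{1..M}" "v / d" c 1] by simp
  ultimately show ?thesis unfolding M_def by (rule Lim_transform_eventually[rotated])
qed

theorem proposition4:
  fixes v d s :: real
  assumes "v > 0" and "d > 0" and "s \<ge> d / 2"
  defines "M \<equiv> num_lanes d s" and "J \<equiv> Jlane d s"
  shows "J \<in> {1..M}
    \<and> dlane d s J = Min (dlane d s ` {1..M})
    \<and> arrival v d s J 0 = first_arrival v d s
    \<and> (\<forall>i\<in>{1..M}. \<forall>T>0. real (lane_count v d s i T) =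
          (if T \<ge> (dlane d s i - dlane d s J) / v
           then real_of_int \<lfloor>(v * T - dlane d s i + dlane d s J) / d + 1\<rfloor> else 0))
    \<and> (\<forall>T>0. throughput v d s T =
          (1 / T) * (\<Sum>i=1..M. real (lane_count v d s i T)) - 1 / T)
    \<and> (throughput v d s \<longlongrightarrow> real_of_int \<lfloor>2 * s / d + 1\<rfloor> * v / d) at_top"
proof (intro conjI)
  show J_in: "J \<in> {1..M}" unfolding M_def J_def by (rule Jlane_in_lanes[OF assms(2,3)])
  then show "dlane d s J = Min (dlane d s ` {1..M})"
    using dlane_Jlane_le[OF assms(2,3)] unfolding M_def J_def by (intro Min_eqI[symmetric]) auto
  show "arrival v d s J 0 = first_arrival v d s"
    unfolding J_def by (rule first_arrival_eq[OF assms(1-3), symmetric])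
  show "\<forall>i\<in>{1..M}. \<forall>T>0. real (lane_count v d s i T) =
      (if T \<ge> (dlane d s i - dlane d s J) / v
       then real_of_int \<lfloor>(v * T - dlane d s i + dlane d s J) / d + 1\<rfloor> else 0)"
    using lane_count_eq[OF assms(1-3)] unfolding M_def J_def by blast
  show "\<forall>T>0. throughput v d s T = (1 / T) * (\<Sum>i=1..M. real (lane_count v d s i T)) - 1 / T"
    unfolding throughput_def total_count_eq_sum[OF assms(1-3)] M_def by (simp add: diff_divide_distrib)
  have "0 \<le> \<lfloor>2 * s / d\<rfloor>" using assms(2,3) by simp
  then have "real_of_int \<lfloor>2 * s / d + 1\<rfloor> = real (num_lanes d s)" by (simp add: num_lanes_def)
  then show "(throughput v d s \<longlongrightarrow> real_of_int \<lfloor>2 * s / d + 1\<rfloor> * v / d) at_top"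
    using throughput_tendsto[OF assms(1-3)] by simp
qed

end
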